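(* Fix an instance of MCND and a partial aggregation $\mathcal{B}$ (see context). (i) If $(\bar x,\bar y)$ is a feasible solution of the LP relaxation of the DA formulation, then there exist values $z$ of the artificial variables such that $(x,y,z)$, with $x_{ij}^D=\sum_{k\in D}\bar x_{ij}^k$ for all $(i,j)\in\mathcal{A}$, $b\in\mathcal{B}$, $D\in\mathcal{G}_b^{ij}$, and $y_{ij}=\bar y_{ij}$ for all $(i,j)\in\mathcal{A}$, is a feasible solution of the LP relaxation of the PAe formulation built on $\mathcal{B}$; this solution has the same objective value as $(\bar x,\bar y)$. (ii) The converse fails in general: there exist an instance and a partial aggregation $\mathcal{B}$ for which the LP relaxation of PAe has a feasible solution $(x,y,z)$ such that there is no feasible solution $(\bar x,\bar y)$ of the LP relaxation of DA with $\bar y=y$ and $x_{ij}^D=\sum_{k\in D}\bar x_{ij}^k$ for all $(i,j),b,D$. (That is, DA is stronger than PAe.)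
   Context: An instance of MCND consists of a directed graph $G=(\mathcal{N},\mathcal{A})$, a finite set $\mathcal{K}$ of commodities, each $k\in\mathcal{K}$ having an origin $o^k\in\mathcal{N}$, a destination $s^k\in\mathcal{N}$ and a demand $d^k\ge 0$, and for each arc $(i,j)\in\mathcal{A}$ a capacity $u_{ij}$, a per-unit flow cost $c_{ij}$ and a fixed cost $f_{ij}$, all nonnegative. Let $o_i^k=1$ if $i=o^k$ and $0$ otherwise, $s_i^k=1$ if $i=s^k$ and $0$ otherwise, $\mathcal{N}_i^+=\{j:(i,j)\in\mathcal{A}\}$, $\mathcal{N}_i^-=\{j:(j,i)\in\mathcal{A}\}$. LP relaxation of DA: variables $x_{ij}^k\ge 0$ ($k\in\mathcal{K},(i,j)\in\mathcal{A}$) and $0\le y_{ij}\le 1$; minimize $\sum_{k}\sum_{(i,j)}c_{ij}x_{ij}^k+\sum_{(i,j)}f_{ij}y_{ij}$ subject to $\sum_{j\in\mathcal{N}_i^+}x_{ij}^k-\sum_{j\in\mathcal{N}_i^-}x_{ji}^k=(o_i^k-s_i^k)d^k$ for all $k,i$; $\sum_k x_{ij}^k\le u_{ij}y_{ij}$ for all $(i,j)$; $x_{ij}^k\le d^k y_{ij}$ for all $k,(i,j)$. Dispersion: a nonempty set $\mathcal{K}_b\subseteq\mathcal{K}$ of commodities sharing a common origin, together with, for every arc $(i,j)\in\mathcal{A}$, a partition of $\mathcal{K}_b$ into $\mathcal{K}_b^{ij}$ (commodities aggregated on $(i,j)$) and $\mathcal{D}_b^{ij}$ (commodities disaggregated on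 $(i,j)$); either part may be empty. Let $\mathcal{G}_b^{ij}$ be the family consisting of the set $\mathcal{K}_b^{ij}$ (if nonempty) together with the singletons $\{k\}$, $k\in\mathcal{D}_b^{ij}$. A partial aggregation is a set $\mathcal{B}$ of dispersions such that every $k\in\mathcal{K}$ lies in $\mathcal{K}_b$ for exactly one $b\in\mathcal{B}$. LP relaxation of PA (for $\mathcal{B}$): variables $x_{ij}^D\ge0$ for $(i,j)\in\mathcal{A}$, $b\in\mathcal{B}$, $D\in\mathcal{G}_b^{ij}$ (since the $\mathcal{K}_b$ are disjoint, $D$ determines $b$), and $0\le y_{ij}\le1$; minimize $\sum_{(i,j)}c_{ij}\sum_{b}\sum_{D\in\mathcal{G}_b^{ij}}x_{ij}^D+\sum_{(i,j)}f_{ij}y_{ij}$ subject to: for all $b\in\mathcal{B}$, $i\in\mathcal{N}$: $\sum_{j\in\mathcal{N}_i^+}\sum_{D\in\mathcal{G}_b^{ij}}x_{ij}^D-\sum_{j\in\mathcal{N}_i^-}\sum_{D\in\mathcal{G}_b^{ji}}x_{ji}^D=\sum_{k\in\mathcal{K}_b}(o_i^k-s_i^k)d^k$; for all $(i,j)$: $\sum_b\sum_{D\in\mathcal{G}_b^{ij}}x_{ij}^D\le u_{ij}y_{ij}$; for all $(i,j),b,D\in\mathcal{G}_b^{ij}$: $x_{ij}^D\le(\sum_{k\in D}d^k)y_{ij}$. LP relaxation of PAe: the PA LP plus the following. For $b\in\mathcal{B}$, $i\in\mathcal{N}$ let $\mathcal{L}_b^i=\{k\in\mathcal{K}_b:k\in\mathcal{D}_b^{ji}\text{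 for some }j\in\mathcal{N}_i^-\text{ or }k\in\mathcal{D}_b^{ij}\text{ for some }j\in\mathcal{N}_i^+\}$; $\mathcal{M}_b^i=\{\{k\}:k\in\mathcal{L}_b^i\}\cup\{\mathcal{K}_b\setminus\mathcal{L}_b^i\}$ (the last set only if nonempty); $\check{\mathcal{T}}_b^i$ = the set of distinct nonempty sets among $\{\mathcal{K}_b^{ji}:j\in\mathcal{N}_i^-\}$; $\hat{\mathcal{T}}_b^i$ = the set of distinct nonempty sets among $\{\mathcal{K}_b^{ij}:j\in\mathcal{N}_i^+\}$. For every $(b,i)$ with $\mathcal{L}_b^i\neq\emptyset$ add variables $z_{CD}^{ib}\ge0$ for $C\in\check{\mathcal{T}}_b^i$, $D\in\mathcal{M}_b^i$ with $C\cap D\ne\emptyset$, and $z_{DC}^{ib}\ge0$ for $D\in\mathcal{M}_b^i$, $C\in\hat{\mathcal{T}}_b^i$ with $C\cap D\neq\emptyset$ (these have zero cost), and constraints: for each $D\in\mathcal{M}_b^i$: $\sum_{j\in\mathcal{N}_i^+:\,D=\{k\},k\in\mathcal{D}_b^{ij}}x_{ij}^{D}-\sum_{j\in\mathcal{N}_i^-:\,D=\{k\},k\in\mathcal{D}_b^{ji}}x_{ji}^{D}+\sum_{C\in\hat{\mathcal{T}}_b^i:C\cap D\neq\emptyset}z_{DC}^{ib}-\sum_{C\in\check{\mathcal{T}}_b^i:C\cap D\ne\emptyset}z_{CD}^{ib}=\sum_{k\in D}(o_i^k-s_i^k)d^k$; for each $C\in\check{\mathcal{T}}_b^i$: $\sum_{D\in\mathcal{M}_b^i:C\cap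 D\ne\emptyset}z_{CD}^{ib}-\sum_{j\in\mathcal{N}_i^-:\mathcal{K}_b^{ji}=C}x_{ji}^C=0$; for each $C\in\hat{\mathcal{T}}_b^i$: $\sum_{j\in\mathcal{N}_i^+:\mathcal{K}_b^{ij}=C}x_{ij}^C-\sum_{D\in\mathcal{M}_b^i:C\cap D\neq\emptyset}z_{DC}^{ib}=0$. The objective is that of PA. *)

theory Defs
  imports Complex_Main
begin

record ('n, 'k) mcnd =
  nodes :: "'n set"
  arcs  :: "('n \<times> 'n) set"
  comms :: "'k set"
  orig  :: "'k \<Rightarrow> 'n"
  dst   :: "'k \<Rightarrow> 'n"
  dem   :: "'k \<Rightarrow> real"
  cap   :: "'n \<times> 'n \<Rightarrow> real"
  ucost :: "'n \<times> 'n \<Rightarrow> real"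
  fcost :: "'n \<times> 'n \<Rightarrow> real"

definition mcnd_instance :: "('n, 'k) mcnd \<Rightarrow> bool" where
  "mcnd_instance I \<longleftrightarrow>
     finite (nodes I) \<and> arcs I \<subseteq> nodes I \<times> nodes I \<and> finite (comms I) \<and>
     (\<forall>k\<in>comms I. orig I k \<in> nodes I \<and> dst I k \<in> nodes I \<and> dem I k \<ge> 0) \<and>
     (\<forall>a\<in>arcs I. cap I a \<ge> 0 \<and> ucost I a \<ge> 0 \<and> fcost I a \<ge> 0)"

definition outN :: "('n, 'k) mcnd \<Rightarrow> 'n \<Rightarrow> 'n set" where
  "outN I i = {j. (i, j) \<in> arcs I}"

definition inN :: "('n, 'k) mcnd \<Rightarrow> 'n \<Rightarrow> 'n set" where
  "inN I i = {j. (j, i) \<in> arcs I}"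

definition netsupply :: "('n, 'k) mcnd \<Rightarrow> 'k \<Rightarrow> 'n \<Rightarrow> real" where
  "netsupply I k i = ((if i = orig I k then 1 else 0) - (if i = dst I k then 1 else 0)) * dem I k"

definition DA_feasible :: "('n, 'k) mcnd \<Rightarrow> ('k \<Rightarrow> 'n \<times> 'n \<Rightarrow> real) \<Rightarrow> ('n \<times> 'n \<Rightarrow> real) \<Rightarrow> bool" where
  "DA_feasible I x y \<longleftrightarrow>
     (\<forall>k\<in>comms I. \<forall>a\<in>arcs I. x k a \<ge> 0) \<and>
     (\<forall>a\<in>arcs I. 0 \<le> y a \<and> y a \<le> 1) \<and>
     (\<forall>k\<in>comms I. \<forall>i\<in>nodes I.
        (\<Sum>j\<in>outN I i. x k (i, j)) - (\<Sum>j\<in>inN I i. x k (j, i)) = netsupply I k i) \<and>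
     (\<forall>a\<in>arcs I. (\<Sum>k\<in>comms I. x k a) \<le> cap I a * y a) \<and>
     (\<forall>k\<in>comms I. \<forall>a\<in>arcs I. x k a \<le> dem I k * y a)"

definition DA_obj :: "('n, 'k) mcnd \<Rightarrow> ('k \<Rightarrow> 'n \<times> 'n \<Rightarrow> real) \<Rightarrow> ('n \<times> 'n \<Rightarrow> real) \<Rightarrow> real" where
  "DA_obj I x y = (\<Sum>a\<in>arcs I. ucost I a * (\<Sum>k\<in>comms I. x k a)) + (\<Sum>a\<in>arcs I. fcost I a * y a)"

text \<open>A dispersion $b$ is a pair: its commodity set $\mathcal{K}_b$ (first component) and,
  for each arc $(i,j)$, the set $\mathcal{K}_b^{ij}$ of commodities aggregated on it (second
  component).\<close>

type_synonym ('n, 'k) dispersion = "'k set \<times> ('n \<times> 'n \<Rightarrow> 'k set)"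

definition Kset :: "('n, 'k) dispersion \<Rightarrow> 'k set" where
  "Kset b = fst b"

definition Agg :: "('n, 'k) dispersion \<Rightarrow> 'n \<times> 'n \<Rightarrow> 'k set" where
  "Agg b a = snd b a"

definition Dis :: "('n, 'k) dispersion \<Rightarrow> 'n \<times> 'n \<Rightarrow> 'k set" where
  "Dis b a = Kset b - Agg b a"

definition is_dispersion :: "('n, 'k) mcnd \<Rightarrow> ('n, 'k) dispersion \<Rightarrow> bool" where
  "is_dispersion I b \<longleftrightarrow>
     Kset b \<noteq> {} \<and> Kset b \<subseteq> comms I \<and>
     (\<exists>r. \<forall>k\<in>Kset b. orig I k = r) \<and>
     (\<forall>a\<in>arcs I. Agg b a \<subseteq> Kset b)"

definition partial_aggregation :: "('n, 'k) mcnd \<Rightarrow> ('n, 'k) dispersion set \<Rightarrow> bool" where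
  "partial_aggregation I B \<longleftrightarrow>
     (\<forall>b\<in>B. is_dispersion I b) \<and>
     (\<forall>k\<in>comms I. \<exists>!b. b \<in> B \<and> k \<in> Kset b)"

definition Gfam :: "('n, 'k) dispersion \<Rightarrow> 'n \<times> 'n \<Rightarrow> 'k set set" where
  "Gfam b a = (if Agg b a \<noteq> {} then {Agg b a} else {}) \<union> {{k} | k. k \<in> Dis b a}"

text \<open>PA variables $x_{ij}^D$ are represented as \<open>x (i,j) D\<close> (the set $D$ determines $b$).\<close>

definition PA_feasible :: "('n, 'k) mcnd \<Rightarrow> ('n, 'k) dispersion set \<Rightarrow>
    ('n \<times> 'n \<Rightarrow> 'k set \<Rightarrow> real) \<Rightarrow> ('n \<times> 'n \<Rightarrow> real) \<Rightarrow> bool" where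
  "PA_feasible I B x y \<longleftrightarrow>
     (\<forall>a\<in>arcs I. \<forall>b\<in>B. \<forall>D\<in>Gfam b a. x a D \<ge> 0) \<and>
     (\<forall>a\<in>arcs I. 0 \<le> y a \<and> y a \<le> 1) \<and>
     (\<forall>b\<in>B. \<forall>i\<in>nodes I.
        (\<Sum>j\<in>outN I i. \<Sum>D\<in>Gfam b (i, j). x (i, j) D)
        - (\<Sum>j\<in>inN I i. \<Sum>D\<in>Gfam b (j, i). x (j, i) D)
        = (\<Sum>k\<in>Kset b. netsupply I k i)) \<and>
     (\<forall>a\<in>arcs I. (\<Sum>b\<in>B. \<Sum>D\<in>Gfam b a. x a D) \<le> cap I a * y a) \<and>
     (\<forall>a\<in>arcs I. \<forall>b\<in>B. \<forall>D\<in>Gfam b a. x a D \<le> (\<Sum>k\<in>D. dem I k) * y a)"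

definition PA_obj :: "('n, 'k) mcnd \<Rightarrow> ('n, 'k) dispersion set \<Rightarrow>
    ('n \<times> 'n \<Rightarrow> 'k set \<Rightarrow> real) \<Rightarrow> ('n \<times> 'n \<Rightarrow> real) \<Rightarrow> real" where
  "PA_obj I B x y =
     (\<Sum>a\<in>arcs I. ucost I a * (\<Sum>b\<in>B. \<Sum>D\<in>Gfam b a. x a D)) + (\<Sum>a\<in>arcs I. fcost I a * y a)"

definition Lset :: "('n, 'k) mcnd \<Rightarrow> ('n, 'k) dispersion \<Rightarrow> 'n \<Rightarrow> 'k set" where
  "Lset I b i = {k \<in> Kset b. (\<exists>j\<in>inN I i. k \<in> Dis b (j, i)) \<or> (\<exists>j\<in>outN I i. k \<in> Dis b (i, j))}"

definition Mfam :: "('n, 'k) mcnd \<Rightarrow> ('n, 'k) dispersion \<Rightarrow> 'n \<Rightarrow> 'k set set" where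
  "Mfam I b i = {{k} | k. k \<in> Lset I b i} \<union>
     (if Kset b - Lset I b i \<noteq> {} then {Kset b - Lset I b i} else {})"

definition Tin :: "('n, 'k) mcnd \<Rightarrow> ('n, 'k) dispersion \<Rightarrow> 'n \<Rightarrow> 'k set set" where
  "Tin I b i = {Agg b (j, i) | j. j \<in> inN I i \<and> Agg b (j, i) \<noteq> {}}"

definition Tout :: "('n, 'k) mcnd \<Rightarrow> ('n, 'k) dispersion \<Rightarrow> 'n \<Rightarrow> 'k set set" where
  "Tout I b i = {Agg b (i, j) | j. j \<in> outN I i \<and> Agg b (i, j) \<noteq> {}}"

text \<open>Artificial variables: \<open>zin b i C D\<close> is $z_{CD}^{ib}$ ($C \in \check{\mathcal{T}}_b^i$,
  $D \in \mathcal{M}_b^i$) and \<open>zout b i D C\<close> is $z_{DC}^{ib}$ ($D \in \mathcal{M}_b^i$,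
  $C \in \hat{\mathcal{T}}_b^i$). They are kept separate since the same pair of sets may index
  both kinds.\<close>

definition PAe_feasible :: "('n, 'k) mcnd \<Rightarrow> ('n, 'k) dispersion set \<Rightarrow>
    ('n \<times> 'n \<Rightarrow> 'k set \<Rightarrow> real) \<Rightarrow> ('n \<times> 'n \<Rightarrow> real) \<Rightarrow>
    (('n, 'k) dispersion \<Rightarrow> 'n \<Rightarrow> 'k set \<Rightarrow> 'k set \<Rightarrow> real) \<Rightarrow>
    (('n, 'k) dispersion \<Rightarrow> 'n \<Rightarrow> 'k set \<Rightarrow> 'k set \<Rightarrow> real) \<Rightarrow> bool" where
  "PAe_feasible I B x y zin zout \<longleftrightarrow>
     PA_feasible I B x y \<and>
     (\<forall>b\<in>B. \<forall>i\<in>nodes I. Lset I b i \<noteq> {} \<longrightarrow>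
        (\<forall>C\<in>Tin I b i. \<forall>D\<in>Mfam I b i. C \<inter> D \<noteq> {} \<longrightarrow> zin b i C D \<ge> 0) \<and>
        (\<forall>D\<in>Mfam I b i. \<forall>C\<in>Tout I b i. C \<inter> D \<noteq> {} \<longrightarrow> zout b i D C \<ge> 0) \<and>
        (\<forall>D\<in>Mfam I b i.
           (\<Sum>j\<in>{j\<in>outN I i. \<exists>k. D = {k} \<and> k \<in> Dis b (i, j)}. x (i, j) D)
           - (\<Sum>j\<in>{j\<in>inN I i. \<exists>k. D = {k} \<and> k \<in> Dis b (j, i)}. x (j, i) D)
           + (\<Sum>C\<in>{C\<in>Tout I b i. C \<inter> D \<noteq> {}}. zout b i D C)
           - (\<Sum>C\<in>{C\<in>Tin I b i. C \<inter> D \<noteq> {}}. zin b i C D)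
           = (\<Sum>k\<in>D. netsupply I k i)) \<and>
        (\<forall>C\<in>Tin I b i.
           (\<Sum>D\<in>{D\<in>Mfam I b i. C \<inter> D \<noteq> {}}. zin b i C D)
           - (\<Sum>j\<in>{j\<in>inN I i. Agg b (j, i) = C}. x (j, i) C) = 0) \<and>
        (\<forall>C\<in>Tout I b i.
           (\<Sum>j\<in>{j\<in>outN I i. Agg b (i, j) = C}. x (i, j) C)
           - (\<Sum>D\<in>{D\<in>Mfam I b i. C \<inter> D \<noteq> {}}. zout b i D C) = 0))"

end

(* Since every family G_b^{ij} partitions K_b, replacing the DA flows by their sums over the
   members of G_b^{ij} keeps the load of every arc, the flow balance of every dispersion and the
   objective. For the extension, z^{ib}_{CD} (and z^{ib}_{DC}) is taken to be the DA flow of the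
   commodities in C \<inter> D on the arcs at node i on which exactly C is aggregated. As M_b^i also
   partitions K_b, these transfers recompose each aggregated arc flow; and on each arc at i a member
   D of M_b^i is carried either as a disaggregated singleton or inside the aggregated set, so the
   balance of D at i is DA flow conservation summed over D.
   Aggregation forgets the individual linking constraints x^k \<le> d^k y, which is what the
   counterexample for the converse exploits. *)

theory Submission
  imports Defs "HOL-Library.Disjoint_Sets"
begin

lemma sum_Int_partition:
  assumes "finite A" "partition_on A P" "C \<subseteq> A"
  shows "(\<Sum>D\<in>P. sum f (C \<inter> D)) = sum f C"
proof -
  have "(\<Sum>D\<in>P. sum f (C \<inter> D)) = (\<Sum>D\<in>P. \<Sum>k\<in>D. if k \<in> C then f k else 0)"
  proof (rule sum.cong[OF refl])
    fix D assume "D \<in> P"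
    then have "finite D"
      using assms(1,2) by (metis Union_upper finite_subset partition_onD1)
    then show "sum f (C \<inter> D) = (\<Sum>k\<in>D. if k \<in> C then f k else 0)"
      by (subst Int_commute) (rule sum.inter_restrict)
  qed
  also have "\<dots> = (\<Sum>k\<in>A. if k \<in> C then f k else 0)"
    by (rule sum.partition[OF assms(1,2), symmetric])
  also have "\<dots> = sum f C"
    using assms(1,3) by (simp add: sum.inter_restrict[symmetric] Int_absorb1)
  finally show ?thesis .
qed

lemma sum_over_image_fibres:
  assumes "finite J"
  shows "(\<Sum>C\<in>{C\<in>{g j | j. j \<in> J \<and> P (g j)}. Q C}. \<Sum>j\<in>{j\<in>J. g j = C}. F j)
       = (\<Sum>j\<in>{j\<in>J. P (g j) \<and> Q (g j)}. F j)"
proof -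
  let ?S = "{j\<in>J. P (g j) \<and> Q (g j)}"
  have "{C\<in>{g j | j. j \<in> J \<and> P (g j)}. Q C} = g ` ?S" by blast
  moreover have "{j\<in>J. g j = C} = {j\<in>?S. g j = C}" if "C \<in> g ` ?S" for C
    using that by auto
  ultimately show ?thesis
    using sum.image_gen[of ?S F g] assms by simp
qed

lemma partition_on_Gfam:
  assumes "Agg b a \<subseteq> Kset b"
  shows "partition_on (Kset b) (Gfam b a)"
  using assms by (intro partition_onI) (auto simp: Gfam_def Dis_def disjnt_def split: if_splits)

lemma Lset_subset_Kset: "Lset I b i \<subseteq> Kset b"
  by (auto simp: Lset_def)

lemma partition_on_Mfam: "partition_on (Kset b) (Mfam I b i)"
  using Lset_subset_Kset[of I b i]
  by (intro partition_onI) (auto simp: Mfam_def disjnt_def split: if_splits)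

lemma Dis_subset_Lset:
  shows Dis_out_subset_Lset: "j \<in> outN I i \<Longrightarrow> Dis b (i, j) \<subseteq> Lset I b i"
    and Dis_in_subset_Lset: "j \<in> inN I i \<Longrightarrow> Dis b (j, i) \<subseteq> Lset I b i"
  by (auto simp: Lset_def Dis_def)

lemma finite_outN: "mcnd_instance I \<Longrightarrow> finite (outN I i)"
  by (rule finite_subset[of _ "nodes I"]) (auto simp: mcnd_instance_def outN_def)

lemma finite_inN: "mcnd_instance I \<Longrightarrow> finite (inN I i)"
  by (rule finite_subset[of _ "nodes I"]) (auto simp: mcnd_instance_def inN_def)

lemma outN_arc: "j \<in> outN I i \<Longrightarrow> (i, j) \<in> arcs I"
  by (simp add: outN_def)

lemma inN_arc: "j \<in> inN I i \<Longrightarrow> (j, i) \<in> arcs I"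
  by (simp add: inN_def)

context
  fixes I :: "('n, 'k) mcnd" and B :: "('n, 'k) dispersion set"
  assumes aggregation: "partial_aggregation I B"
begin

lemma Kset_subset_comms: "b \<in> B \<Longrightarrow> Kset b \<subseteq> comms I"
  using aggregation by (simp add: partial_aggregation_def is_dispersion_def)

lemma Kset_nonempty: "b \<in> B \<Longrightarrow> Kset b \<noteq> {}"
  using aggregation by (simp add: partial_aggregation_def is_dispersion_def)

lemma Agg_subset_Kset: "b \<in> B \<Longrightarrow> a \<in> arcs I \<Longrightarrow> Agg b a \<subseteq> Kset b"
  using aggregation by (simp add: partial_aggregation_def is_dispersion_def)

lemma partition_on_Kset_image: "partition_on (comms I) (Kset ` B)"
proof (rule partition_onI)
  show "\<Union> (Kset ` B) = comms I"
    using aggregation Kset_subset_comms by (fastforce simp: partial_aggregation_def)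
  show "{} \<notin> Kset ` B"
    using Kset_nonempty by blast
  show "disjnt P Q" if "P \<in> Kset ` B" "Q \<in> Kset ` B" "P \<noteq> Q" for P Q
    using that aggregation Kset_subset_comms
    unfolding partial_aggregation_def disjnt_def by blast
qed

lemma inj_on_Kset: "inj_on Kset B"
proof (rule inj_onI)
  fix b c assume "b \<in> B" "c \<in> B" "Kset b = Kset c"
  moreover obtain k where "k \<in> Kset b"
    using \<open>b \<in> B\<close> Kset_nonempty by blast
  ultimately show "b = c"
    using aggregation Kset_subset_comms unfolding partial_aggregation_def by blast
qed

lemma sum_over_partial_aggregation:
  assumes "finite (comms I)"
  shows "(\<Sum>b\<in>B. sum f (Kset b)) = sum f (comms I)"
  using sum.reindex[OF inj_on_Kset, of "sum f"]
    sum.partition[OF assms partition_on_Kset_image, of f] by simp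

end

lemma DA_net_flow:
  assumes "DA_feasible I xb yb" "D \<subseteq> comms I" "i \<in> nodes I"
  shows "(\<Sum>j\<in>outN I i. \<Sum>k\<in>D. xb k (i, j)) - (\<Sum>j\<in>inN I i. \<Sum>k\<in>D. xb k (j, i))
       = (\<Sum>k\<in>D. netsupply I k i)"
proof -
  have "(\<Sum>j\<in>outN I i. \<Sum>k\<in>D. xb k (i, j)) - (\<Sum>j\<in>inN I i. \<Sum>k\<in>D. xb k (j, i))
      = (\<Sum>k\<in>D. (\<Sum>j\<in>outN I i. xb k (i, j)) - (\<Sum>j\<in>inN I i. xb k (j, i)))"
    by (simp add: sum.swap[of _ "outN I i"] sum.swap[of _ "inN I i"] sum_subtractf)
  also have "\<dots> = (\<Sum>k\<in>D. netsupply I k i)"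
    using assms unfolding DA_feasible_def by (intro sum.cong) auto
  finally show ?thesis .
qed

lemma sum_Gfam:
  assumes "Agg b a \<subseteq> Kset b" "finite (Kset b)"
  shows "(\<Sum>D\<in>Gfam b a. sum f D) = sum f (Kset b)"
  using sum.partition[OF assms(2) partition_on_Gfam[OF assms(1)], of f] by simp

text \<open>With \<open>J = inN I i\<close> and \<open>e j = (j, i)\<close> this is the witness for $z_{CD}^{ib}$, with
  \<open>J = outN I i\<close> and \<open>e j = (i, j)\<close> the one for $z_{DC}^{ib}$.\<close>

definition transfer_flow ::
    "('k \<Rightarrow> 'n \<times> 'n \<Rightarrow> real) \<Rightarrow> ('n, 'k) dispersion \<Rightarrow> 'n set \<Rightarrow> ('n \<Rightarrow> 'n \<times> 'n) \<Rightarrow>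
     'k set \<Rightarrow> 'k set \<Rightarrow> real" where
  "transfer_flow xb b J e C D = (\<Sum>j\<in>{j\<in>J. Agg b (e j) = C}. \<Sum>k\<in>C \<inter> D. xb k (e j))"

lemma transfer_flow_nonneg:
  assumes "\<And>j k. j \<in> J \<Longrightarrow> k \<in> Agg b (e j) \<Longrightarrow> 0 \<le> xb k (e j)"
  shows "0 \<le> transfer_flow xb b J e C D"
  unfolding transfer_flow_def using assms by (auto intro!: sum_nonneg)

lemma sum_transfer_flow_over_T:
  assumes "finite J"
  shows "(\<Sum>C\<in>{C\<in>{Agg b (e j) | j. j \<in> J \<and> Agg b (e j) \<noteq> {}}. C \<inter> D \<noteq> {}}.
            transfer_flow xb b J e C D)
       = (\<Sum>j\<in>J. \<Sum>k\<in>Agg b (e j) \<inter> D. xb k (e j))"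
proof -
  have "(\<Sum>C\<in>{C\<in>{Agg b (e j) | j. j \<in> J \<and> Agg b (e j) \<noteq> {}}. C \<inter> D \<noteq> {}}.
            transfer_flow xb b J e C D)
      = (\<Sum>C\<in>{C\<in>{Agg b (e j) | j. j \<in> J \<and> Agg b (e j) \<noteq> {}}. C \<inter> D \<noteq> {}}.
            \<Sum>j\<in>{j\<in>J. Agg b (e j) = C}. \<Sum>k\<in>Agg b (e j) \<inter> D. xb k (e j))"
    unfolding transfer_flow_def by (auto intro!: sum.cong)
  also have "\<dots> = (\<Sum>j\<in>{j\<in>J. Agg b (e j) \<noteq> {} \<and> Agg b (e j) \<inter> D \<noteq> {}}.
                      \<Sum>k\<in>Agg b (e j) \<inter> D. xb k (e j))"
    by (rule sum_over_image_fibres[OF assms])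
  also have "\<dots> = (\<Sum>j\<in>J. \<Sum>k\<in>Agg b (e j) \<inter> D. xb k (e j))"
    by (rule sum.mono_neutral_left) (use assms in auto)
  finally show ?thesis .
qed

lemma sum_transfer_flow_over_M:
  assumes "finite (Kset b)" "C \<subseteq> Kset b"
  shows "(\<Sum>D\<in>{D\<in>Mfam I b i. C \<inter> D \<noteq> {}}. transfer_flow xb b J e C D)
       = (\<Sum>j\<in>{j\<in>J. Agg b (e j) = C}. \<Sum>k\<in>C. xb k (e j))"
proof -
  have "(\<Sum>D\<in>{D\<in>Mfam I b i. C \<inter> D \<noteq> {}}. transfer_flow xb b J e C D)
      = (\<Sum>D\<in>Mfam I b i. transfer_flow xb b J e C D)"
    using finite_elements[OF assms(1) partition_on_Mfam]
    by (intro sum.mono_neutral_left) (auto simp: transfer_flow_def)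
  also have "\<dots> = (\<Sum>j\<in>{j\<in>J. Agg b (e j) = C}. \<Sum>D\<in>Mfam I b i. \<Sum>k\<in>C \<inter> D. xb k (e j))"
    unfolding transfer_flow_def by (rule sum.swap)
  also have "\<dots> = (\<Sum>j\<in>{j\<in>J. Agg b (e j) = C}. \<Sum>k\<in>C. xb k (e j))"
    by (intro sum.cong[OF refl] sum_Int_partition[OF assms(1) partition_on_Mfam assms(2)])
  finally show ?thesis .
qed

text \<open>A member of $\mathcal{M}_b^i$ is either a singleton $\{k\}$, with $k$ disaggregated or
  aggregated on the arc, or consists of commodities aggregated on every arc at $i$.\<close>

lemma sum_Mfam_split:
  assumes "D \<in> Mfam I b i" "Agg b a \<subseteq> Kset b" "Dis b a \<subseteq> Lset I b i"
  shows "(if \<exists>k. D = {k} \<and> k \<in> Dis b a then sum h D else 0) + sum h (Agg b a \<inter> D) = sum h D"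
proof -
  consider (singleton) k where "D = {k}" "k \<in> Lset I b i"
    | (rest) "D = Kset b - Lset I b i"
    using assms(1) by (auto simp: Mfam_def split: if_splits)
  then show ?thesis
  proof cases
    case singleton
    then show ?thesis
      using Lset_subset_Kset[of I b i] by (auto simp: Dis_def)
  next
    case rest
    then have not_singleton: "(\<exists>k. D = {k} \<and> k \<in> Dis b a) \<longleftrightarrow> False"
      and "Agg b a \<inter> D = D"
      using assms(3) by (auto simp: Dis_def)
    then show ?thesis by (simp only: not_singleton if_False) simp
  qed
qed

lemma star_flow_split:
  assumes "finite J" "D \<in> Mfam I b i"
    and "\<And>j. j \<in> J \<Longrightarrow> Agg b (e j) \<subseteq> Kset b" "\<And>j. j \<in> J \<Longrightarrow> Dis b (e j) \<subseteq> Lset I b i"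
  shows "(\<Sum>j\<in>{j\<in>J. \<exists>k. D = {k} \<and> k \<in> Dis b (e j)}. \<Sum>k\<in>D. xb k (e j))
       + (\<Sum>C\<in>{C\<in>{Agg b (e j) | j. j \<in> J \<and> Agg b (e j) \<noteq> {}}. C \<inter> D \<noteq> {}}.
            transfer_flow xb b J e C D)
       = (\<Sum>j\<in>J. \<Sum>k\<in>D. xb k (e j))"
  unfolding sum_transfer_flow_over_T[OF assms(1)] sum.inter_filter[OF assms(1)] sum.distrib[symmetric]
  using assms(2-4) by (intro sum.cong[OF refl] sum_Mfam_split)

context
  fixes I :: "('n, 'k) mcnd" and B :: "('n, 'k) dispersion set"
    and xb :: "'k \<Rightarrow> 'n \<times> 'n \<Rightarrow> real" and yb :: "'n \<times> 'n \<Rightarrow> real"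
  assumes mcnd: "mcnd_instance I"
    and aggregation: "partial_aggregation I B"
    and feasible: "DA_feasible I xb yb"
begin

lemma finite_Kset: "b \<in> B \<Longrightarrow> finite (Kset b)"
  using mcnd Kset_subset_comms[OF aggregation]
  by (meson finite_subset mcnd_instance_def)

lemma xb_nonneg: "k \<in> comms I \<Longrightarrow> a \<in> arcs I \<Longrightarrow> 0 \<le> xb k a"
  using feasible by (simp add: DA_feasible_def)

lemma xb_nonneg_Agg: "b \<in> B \<Longrightarrow> a \<in> arcs I \<Longrightarrow> k \<in> Agg b a \<Longrightarrow> 0 \<le> xb k a"
  using Agg_subset_Kset[OF aggregation] Kset_subset_comms[OF aggregation] xb_nonneg by blast

lemma sum_Gfam_aggregate:
  "b \<in> B \<Longrightarrow> a \<in> arcs I \<Longrightarrow> (\<Sum>D\<in>Gfam b a. \<Sum>k\<in>D. xb k a) = (\<Sum>k\<in>Kset b. xb k a)"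
  by (rule sum_Gfam[OF Agg_subset_Kset[OF aggregation] finite_Kset])

lemma arc_load_aggregate:
  assumes "a \<in> arcs I"
  shows "(\<Sum>b\<in>B. \<Sum>D\<in>Gfam b a. \<Sum>k\<in>D. xb k a) = (\<Sum>k\<in>comms I. xb k a)"
  using assms mcnd sum_Gfam_aggregate sum_over_partial_aggregation[OF aggregation]
  by (simp add: mcnd_instance_def)

lemma PA_feasible_aggregate: "PA_feasible I B (\<lambda>a D. \<Sum>k\<in>D. xb k a) yb"
  unfolding PA_feasible_def
proof (intro conjI ballI)
  fix a b D assume a: "a \<in> arcs I" and b: "b \<in> B" and D: "D \<in> Gfam b a"
  have "D \<subseteq> comms I"
    using D partition_on_Gfam[OF Agg_subset_Kset[OF aggregation b a]]
      Kset_subset_comms[OF aggregation b] by (auto dest: partition_onD1)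
  then show "0 \<le> (\<Sum>k\<in>D. xb k a)"
    using a by (auto intro: sum_nonneg xb_nonneg)
  have "(\<Sum>k\<in>D. xb k a) \<le> (\<Sum>k\<in>D. dem I k * yb a)"
    using \<open>D \<subseteq> comms I\<close> a feasible by (intro sum_mono) (auto simp: DA_feasible_def)
  then show "(\<Sum>k\<in>D. xb k a) \<le> (\<Sum>k\<in>D. dem I k) * yb a"
    by (simp add: sum_distrib_right)
next
  fix a assume "a \<in> arcs I"
  then show "0 \<le> yb a" "yb a \<le> 1" "(\<Sum>b\<in>B. \<Sum>D\<in>Gfam b a. \<Sum>k\<in>D. xb k a) \<le> cap I a * yb a"
    using feasible arc_load_aggregate by (auto simp: DA_feasible_def)
next
  fix b i assume b: "b \<in> B" and i: "i \<in> nodes I"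
  then show "(\<Sum>j\<in>outN I i. \<Sum>D\<in>Gfam b (i, j). \<Sum>k\<in>D. xb k (i, j))
      - (\<Sum>j\<in>inN I i. \<Sum>D\<in>Gfam b (j, i). \<Sum>k\<in>D. xb k (j, i))
      = (\<Sum>k\<in>Kset b. netsupply I k i)"
    using DA_net_flow[OF feasible Kset_subset_comms[OF aggregation b] i]
    by (simp add: sum_Gfam_aggregate outN_arc inN_arc)
qed

lemma PA_obj_aggregate: "PA_obj I B (\<lambda>a D. \<Sum>k\<in>D. xb k a) yb = DA_obj I xb yb"
  unfolding PA_obj_def DA_obj_def by (simp add: arc_load_aggregate)

lemma node_balance_aggregate:
  assumes b: "b \<in> B" and i: "i \<in> nodes I" and D: "D \<in> Mfam I b i"
  shows "(\<Sum>j\<in>{j\<in>outN I i. \<exists>k. D = {k} \<and> k \<in> Dis b (i, j)}. \<Sum>k\<in>D. xb k (i, j))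
       - (\<Sum>j\<in>{j\<in>inN I i. \<exists>k. D = {k} \<and> k \<in> Dis b (j, i)}. \<Sum>k\<in>D. xb k (j, i))
       + (\<Sum>C\<in>{C\<in>Tout I b i. C \<inter> D \<noteq> {}}. transfer_flow xb b (outN I i) (\<lambda>j. (i, j)) C D)
       - (\<Sum>C\<in>{C\<in>Tin I b i. C \<inter> D \<noteq> {}}. transfer_flow xb b (inN I i) (\<lambda>j. (j, i)) C D)
       = (\<Sum>k\<in>D. netsupply I k i)"
proof -
  have out: "(\<Sum>j\<in>{j\<in>outN I i. \<exists>k. D = {k} \<and> k \<in> Dis b (i, j)}. \<Sum>k\<in>D. xb k (i, j))
      + (\<Sum>C\<in>{C\<in>Tout I b i. C \<inter> D \<noteq> {}}. transfer_flow xb b (outN I i) (\<lambda>j. (i, j)) C D)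
      = (\<Sum>j\<in>outN I i. \<Sum>k\<in>D. xb k (i, j))"
    unfolding Tout_def
    by (rule star_flow_split[OF finite_outN[OF mcnd] D])
      (simp_all add: Agg_subset_Kset[OF aggregation b] outN_arc Dis_out_subset_Lset)
  have into: "(\<Sum>j\<in>{j\<in>inN I i. \<exists>k. D = {k} \<and> k \<in> Dis b (j, i)}. \<Sum>k\<in>D. xb k (j, i))
      + (\<Sum>C\<in>{C\<in>Tin I b i. C \<inter> D \<noteq> {}}. transfer_flow xb b (inN I i) (\<lambda>j. (j, i)) C D)
      = (\<Sum>j\<in>inN I i. \<Sum>k\<in>D. xb k (j, i))"
    unfolding Tin_def
    by (rule star_flow_split[OF finite_inN[OF mcnd] D])
      (simp_all add: Agg_subset_Kset[OF aggregation b] inN_arc Dis_in_subset_Lset)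
  have "D \<subseteq> comms I"
    using D partition_on_Mfam[of b I i] Kset_subset_comms[OF aggregation b]
    by (auto dest: partition_onD1)
  from DA_net_flow[OF feasible this i] out into show ?thesis
    by linarith
qed

lemma Tin_subset_Kset: "b \<in> B \<Longrightarrow> C \<in> Tin I b i \<Longrightarrow> C \<subseteq> Kset b"
  by (auto simp: Tin_def dest: inN_arc Agg_subset_Kset[OF aggregation])

lemma Tout_subset_Kset: "b \<in> B \<Longrightarrow> C \<in> Tout I b i \<Longrightarrow> C \<subseteq> Kset b"
  by (auto simp: Tout_def dest: outN_arc Agg_subset_Kset[OF aggregation])

lemma PAe_feasible_aggregate:
  "PAe_feasible I B (\<lambda>a D. \<Sum>k\<in>D. xb k a) yb
     (\<lambda>b i C D. transfer_flow xb b (inN I i) (\<lambda>j. (j, i)) C D)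
     (\<lambda>b i D C. transfer_flow xb b (outN I i) (\<lambda>j. (i, j)) C D)"
  unfolding PAe_feasible_def
proof (intro conjI ballI impI PA_feasible_aggregate)
  fix b i C D assume b: "b \<in> B"
  show "0 \<le> transfer_flow xb b (inN I i) (\<lambda>j. (j, i)) C D"
    by (rule transfer_flow_nonneg) (rule xb_nonneg_Agg[OF b inN_arc])
  show "0 \<le> transfer_flow xb b (outN I i) (\<lambda>j. (i, j)) C D"
    by (rule transfer_flow_nonneg) (rule xb_nonneg_Agg[OF b outN_arc])
next
  fix b i D assume "b \<in> B" "i \<in> nodes I" "D \<in> Mfam I b i"
  then show "(\<Sum>j\<in>{j\<in>outN I i. \<exists>k. D = {k} \<and> k \<in> Dis b (i, j)}. \<Sum>k\<in>D. xb k (i, j))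
       - (\<Sum>j\<in>{j\<in>inN I i. \<exists>k. D = {k} \<and> k \<in> Dis b (j, i)}. \<Sum>k\<in>D. xb k (j, i))
       + (\<Sum>C\<in>{C\<in>Tout I b i. C \<inter> D \<noteq> {}}. transfer_flow xb b (outN I i) (\<lambda>j. (i, j)) C D)
       - (\<Sum>C\<in>{C\<in>Tin I b i. C \<inter> D \<noteq> {}}. transfer_flow xb b (inN I i) (\<lambda>j. (j, i)) C D)
       = (\<Sum>k\<in>D. netsupply I k i)"
    by (rule node_balance_aggregate)
next
  fix b i C assume "b \<in> B" "C \<in> Tin I b i"
  then show "(\<Sum>D\<in>{D\<in>Mfam I b i. C \<inter> D \<noteq> {}}. transfer_flow xb b (inN I i) (\<lambda>j. (j, i)) C D)
      - (\<Sum>j\<in>{j\<in>inN I i. Agg b (j, i) = C}. \<Sum>k\<in>C. xb k (j, i)) = 0"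
    by (simp add: sum_transfer_flow_over_M finite_Kset Tin_subset_Kset)
next
  fix b i C assume "b \<in> B" "C \<in> Tout I b i"
  then show "(\<Sum>j\<in>{j\<in>outN I i. Agg b (i, j) = C}. \<Sum>k\<in>C. xb k (i, j))
      - (\<Sum>D\<in>{D\<in>Mfam I b i. C \<inter> D \<noteq> {}}. transfer_flow xb b (outN I i) (\<lambda>j. (i, j)) C D) = 0"
    by (simp add: sum_transfer_flow_over_M finite_Kset Tout_subset_Kset)
qed

end

text \<open>Commodities 1 and 2 both start at node 0 of the path 0 \<rightarrow> 1 \<rightarrow> 2 and end at nodes 1
  and 2. Aggregated on every arc, the linking constraint of (1,2) only bounds the joint flow 1
  by 2 y, so y = 1/2 is admissible, whereas commodity 2 alone needs 1 \<le> 1 \<cdot> y. No commodity is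
  disaggregated anywhere, so every $\mathcal{L}_b^i$ is empty and no extension constraint applies.\<close>

lemma PAe_point_without_DA_preimage:
  "\<exists>(I :: (nat, nat) mcnd) (B :: (nat, nat) dispersion set) x y zin zout.
      mcnd_instance I \<and> partial_aggregation I B \<and> PAe_feasible I B x y zin zout \<and>
      \<not> (\<exists>xb. DA_feasible I xb y \<and>
             (\<forall>a\<in>arcs I. \<forall>b\<in>B. \<forall>D\<in>Gfam b a. x a D = (\<Sum>k\<in>D. xb k a)))"
proof -
  define I :: "(nat, nat) mcnd" where
    "I = \<lparr>nodes = {0, 1, 2}, arcs = {(0, 1), (1, 2)}, comms = {1, 2}, orig = (\<lambda>_. 0),
          dst = id, dem = (\<lambda>_. 1), cap = (\<lambda>_. 2), ucost = (\<lambda>_. 0), fcost = (\<lambda>_. 0)\<rparr>"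
  define b :: "(nat, nat) dispersion" where "b = ({1, 2}, \<lambda>_. {1, 2})"
  define x :: "nat \<times> nat \<Rightarrow> nat set \<Rightarrow> real" where "x = (\<lambda>a D. if a = (0, 1) then 2 else 1)"
  define y :: "nat \<times> nat \<Rightarrow> real" where "y = (\<lambda>a. if a = (0, 1) then 1 else 1 / 2)"
  have out: "outN I 0 = {1}" "outN I 1 = {2}" "outN I 2 = {}"
    and into: "inN I 0 = {}" "inN I 1 = {0}" "inN I 2 = {1}"
    by (auto simp: outN_def inN_def I_def)
  have netsupply: "netsupply I k i = (if i = 0 then 1 else 0) - (if i = k then 1 else 0)" for k i
    by (simp add: netsupply_def I_def)
  have I_simps: "nodes I = {0, 1, 2}" "arcs I = {(0, 1), (1, 2)}" "comms I = {1, 2}"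
    "cap I = (\<lambda>_. 2)" "dem I = (\<lambda>_. 1)"
    by (simp_all add: I_def)
  have Kset_b: "Kset b = {1, 2}"
    by (simp add: Kset_def b_def)
  have Gfam_b: "Gfam b a = {{1, 2}}" for a
    by (auto simp: Gfam_def Agg_def Dis_def Kset_def b_def)
  have "mcnd_instance I"
    by (auto simp: mcnd_instance_def I_def)
  moreover have "partial_aggregation I {b}"
    by (auto simp: partial_aggregation_def is_dispersion_def Kset_def Agg_def b_def I_def)
  moreover have "PA_feasible I {b} x y"
    unfolding PA_feasible_def I_simps
    using out(2) into(2) by (simp add: Gfam_b Kset_b x_def y_def out into netsupply)
  then have "PAe_feasible I {b} x y (\<lambda>_ _ _ _. 0) (\<lambda>_ _ _ _. 0)"
    by (simp add: PAe_feasible_def Lset_def Dis_def Agg_def Kset_def b_def)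
  moreover have "\<not> DA_feasible I xb y" for xb
  proof
    assume feasible: "DA_feasible I xb y"
    then have "(\<Sum>j\<in>outN I 2. xb 2 (2, j)) - (\<Sum>j\<in>inN I 2. xb 2 (j, 2)) = netsupply I 2 2"
      by (auto simp: DA_feasible_def I_simps)
    then have "xb 2 (1, 2) = 1"
      by (simp add: out into netsupply)
    moreover have "xb 2 (1, 2) \<le> dem I 2 * y (1, 2)"
      using feasible by (auto simp: DA_feasible_def I_simps)
    ultimately show False
      by (simp add: I_simps y_def)
  qed
  ultimately show ?thesis
    by blast
qed

theorem theorem1:
  shows
  "(\<forall>(I :: ('n, 'k) mcnd) (B :: ('n, 'k) dispersion set) xb yb.
      mcnd_instance I \<and> partial_aggregation I B \<and> DA_feasible I xb yb \<longrightarrow>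
      (\<exists>zin zout.
         PAe_feasible I B (\<lambda>a D. \<Sum>k\<in>D. xb k a) yb zin zout \<and>
         PA_obj I B (\<lambda>a D. \<Sum>k\<in>D. xb k a) yb = DA_obj I xb yb))
   \<and>
   (\<exists>(I :: (nat, nat) mcnd) (B :: (nat, nat) dispersion set) x y zin zout.
      mcnd_instance I \<and> partial_aggregation I B \<and> PAe_feasible I B x y zin zout \<and>
      \<not> (\<exists>xb. DA_feasible I xb y \<and>
             (\<forall>a\<in>arcs I. \<forall>b\<in>B. \<forall>D\<in>Gfam b a. x a D = (\<Sum>k\<in>D. xb k a))))"
  using PAe_feasible_aggregate PA_obj_aggregate PAe_point_without_DA_preimage by blast

end
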